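(* In the FIND setting of the context, fix a leaf cluster $\mathcal C_r$ of $\mathcal T$ and a consistent ordering of $\mathcal T_r^+$. If $\mathcal C_i$ is a leaf node of $\mathcal T_r^+$, then $\boldsymbol\Sigma_i(\mathcal C_i,\mathcal C_i)=\boldsymbol\Sigma(\mathcal C_i,\mathcal C_i)$.
   Context: Setting (FIND). $\mathcal M$ is a finite set of mesh nodes; $\mathbf A$ is an invertible complex matrix indexed by $\mathcal M\times\mathcal M$, structurally symmetric ($A_{ij}\neq0\iff A_{ji}\neq0$); distinct nodes $i,j$ are connected if $A_{ij}\neq 0$. $\boldsymbol\Sigma$ is a complex matrix indexed by $\mathcal M\times\mathcal M$ with $\Sigma_{ij}=0$ whenever $i\neq j$ and $i,j$ are not connected. $\dagger$ is conjugate transpose, $\mathbf X^{-\dagger}=(\mathbf X^{-1})^\dagger$. $\mathbf X(X,Y)$ is the submatrix with rows in $X$, columns in $Y$. For a cluster $\mathcal C\subseteq\mathcal M$: boundary set $\mathcal B_{\mathcal C}=\{i\in\mathcal C: A_{ij}\neq 0\text{ for some } j\notin\mathcal C\}$, inner set $\mathcal I_{\mathcal C}=\mathcal C\setminus\mathcal B_{\mathcal C}$; for $\mathcal C_g$ write $\mathcal B_g,\mathcal I_g$. Cluster tree: $\mathcal T$ is a rooted binary tree of clusters with root $\mathcal M$, each non-leaf cluster the disjoint union of its two children. For a leaf $\mathcal C_r$ with path $r=a_0,\dots,a_d$ (root) and $b_k$ the sibling of $a_k$, the augmented tree $\mathcal T_r^+$ has root $\mathcal C_{-r}=\mathcal M\setminus\mathcal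 C_r$; for $0\le k\le d-2$, $\mathcal C_{-a_k}=\mathcal M\setminus\mathcal C_{a_k}$ has children $\mathcal C_{b_k}$ and $\mathcal C_{-a_{k+1}}$, with $\mathcal C_{-a_{d-1}}$ identified with $\mathcal C_{b_{d-1}}$; each basic cluster $\mathcal C_{b_k}$ carries its subtree from $\mathcal T$. Private inner nodes: $\mathcal S_g=\mathcal I_g$ for a leaf $g$ of $\mathcal T_r^+$; $\mathcal S_g=\mathcal I_g\setminus(\mathcal I_i\cup\mathcal I_j)$ if $g$ has children $i,j$. Consistent ordering: a total order $g_1,\dots,g_m$ of the nodes of $\mathcal T_r^+$ with every node after all its descendants. Elimination: $\mathbf A_{g_1}=\mathbf A$, $\boldsymbol\Sigma_{g_1}=\boldsymbol\Sigma$; for each $g$ (with $\mathbf A_g(\mathcal S_g,\mathcal S_g)$ invertible), $\mathcal L_g=\mathbf A_g(\mathcal B_g,\mathcal S_g)\mathbf A_g(\mathcal S_g,\mathcal S_g)^{-1}$, $\mathbf L_g$ is the identity on $\mathcal M$ except $\mathbf L_g(\mathcal B_g,\mathcal S_g)=\mathcal L_g$, $\mathbf A_{g+}=\mathbf L_g^{-1}\mathbf A_g$, $\boldsymbol\Sigma_{g+}=\mathbf L_g^{-1}\boldsymbol\Sigma_g\mathbf L_g^{-\dagger}$, and $\mathbf A_{g_{t+1}}=\mathbf A_{g_t+}$, $\boldsymbol\Sigma_{g_{t+1}}=\boldsymbol\Sigma_{g_t+}$. Thus $\boldsymbol\Sigma_i$ is the matrix just before eliminating $\mathcal S_i$. 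*)

theory Defs
  imports Complex_Main
begin

type_synonym 'a cmat = "'a \<Rightarrow> 'a \<Rightarrow> complex"

definition idm :: "'a cmat" where
  "idm = (\<lambda>i j. if i = j then 1 else 0)"

definition mmul :: "'a set \<Rightarrow> 'a cmat \<Rightarrow> 'a cmat \<Rightarrow> 'a cmat" where
  "mmul S X Y = (\<lambda>i j. \<Sum>k\<in>S. X i k * Y k j)"

definition is_inv_on :: "'a set \<Rightarrow> 'a cmat \<Rightarrow> 'a cmat \<Rightarrow> bool" where
  "is_inv_on S X Y \<longleftrightarrow>
     (\<forall>i\<in>S. \<forall>j\<in>S. mmul S X Y i j = idm i j \<and> mmul S Y X i j = idm i j)"

definition invertible_on :: "'a set \<Rightarrow> 'a cmat \<Rightarrow> bool" where
  "invertible_on S X \<longleftrightarrow> (\<exists>Y. is_inv_on S X Y)"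

text \<open>Inverse of the submatrix X(S,S) (entries outside S x S set to 0).\<close>
definition mat_inv :: "'a set \<Rightarrow> 'a cmat \<Rightarrow> 'a cmat" where
  "mat_inv S X = (SOME Y. is_inv_on S X Y \<and> (\<forall>i j. i \<notin> S \<or> j \<notin> S \<longrightarrow> Y i j = 0))"

definition adj :: "'a cmat \<Rightarrow> 'a cmat" where
  "adj X = (\<lambda>i j. cnj (X j i))"

datatype 'a ctree = Lf "'a set" | Nd "'a ctree" "'a ctree"

fun cluster :: "'a ctree \<Rightarrow> 'a set" where
  "cluster (Lf C) = C"
| "cluster (Nd l r) = cluster l \<union> cluster r"

fun wf_ctree :: "'a ctree \<Rightarrow> bool" where
  "wf_ctree (Lf C) = True"
| "wf_ctree (Nd l r) = (wf_ctree l \<and> wf_ctree r \<and> cluster l \<inter> cluster r = {})"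

text \<open>Nodes are addressed by positions (paths from the root; False = left, True = right).\<close>
fun subtree :: "'a ctree \<Rightarrow> bool list \<Rightarrow> 'a ctree option" where
  "subtree t [] = Some t"
| "subtree (Nd l r) (False # p) = subtree l p"
| "subtree (Nd l r) (True # p) = subtree r p"
| "subtree (Lf C) (_ # p) = None"

definition nodes :: "'a ctree \<Rightarrow> bool list set" where
  "nodes t = {p. subtree t p \<noteq> None}"

definition is_leaf_node :: "'a ctree \<Rightarrow> bool list \<Rightarrow> bool" where
  "is_leaf_node t p \<longleftrightarrow> (\<exists>C. subtree t p = Some (Lf C))"

definition clus :: "'a ctree \<Rightarrow> bool list \<Rightarrow> 'a set" where
  "clus t p = cluster (the (subtree t p))"

definition proper_desc :: "bool list \<Rightarrow> bool list \<Rightarrow> bool" where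
  "proper_desc q p \<longleftrightarrow> (\<exists>x. x \<noteq> [] \<and> q = p @ x)"

text \<open>augc X t p: X is the tree for C_{-a_k} (complement of the current cluster t = C_{a_k}),
  p the remaining path from a_k down to the leaf r.  Going down one step from a_k to
  a_{k-1}, the new complement C_{-a_{k-1}} has children C_{b_{k-1}} and C_{-a_k}.\<close>
fun augc :: "'a ctree \<Rightarrow> 'a ctree \<Rightarrow> bool list \<Rightarrow> 'a ctree" where
  "augc X t [] = X"
| "augc X (Nd l r) (False # p) = augc (Nd r X) l p"
| "augc X (Nd l r) (True # p) = augc (Nd l X) r p"
| "augc X (Lf C) (_ # p) = X"

text \<open>The augmented tree for the leaf at position rp (rp nonempty): at the root a_d,
  the complement of a_{d-1} is C_{b_{d-1}} (with its subtree).\<close>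
fun aug_tree :: "'a ctree \<Rightarrow> bool list \<Rightarrow> 'a ctree" where
  "aug_tree (Nd l r) (False # p) = augc r l p"
| "aug_tree (Nd l r) (True # p) = augc l r p"
| "aug_tree t _ = t"

definition bnd :: "'a set \<Rightarrow> 'a cmat \<Rightarrow> 'a set \<Rightarrow> 'a set" where
  "bnd M A C = {i \<in> C. \<exists>j \<in> M - C. A i j \<noteq> 0}"

definition inn :: "'a set \<Rightarrow> 'a cmat \<Rightarrow> 'a set \<Rightarrow> 'a set" where
  "inn M A C = C - bnd M A C"

definition priv :: "'a set \<Rightarrow> 'a cmat \<Rightarrow> 'a ctree \<Rightarrow> bool list \<Rightarrow> 'a set" where
  "priv M A t p = (case the (subtree t p) of
       Lf C \<Rightarrow> inn M A C
     | Nd l r \<Rightarrow> inn M A (cluster (Nd l r)) - (inn M A (cluster l) \<union> inn M A (cluster r)))"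

definition consistent_ordering :: "'a ctree \<Rightarrow> bool list list \<Rightarrow> bool" where
  "consistent_ordering t ord \<longleftrightarrow> distinct ord \<and> set ord = nodes t \<and>
     (\<forall>i < length ord. \<forall>j < length ord. proper_desc (ord ! j) (ord ! i) \<longrightarrow> j < i)"

text \<open>One elimination step at node g, with boundary set B = B_g, private set S = S_g:
  maps (A_g, Sigma_g) to (A_{g+}, Sigma_{g+}).\<close>
definition elim_step :: "'a set \<Rightarrow> 'a set \<Rightarrow> 'a set \<Rightarrow> 'a cmat \<times> 'a cmat \<Rightarrow> 'a cmat \<times> 'a cmat" where
  "elim_step M B S st = (let Ag = fst st; Sg = snd st;
       Lc = mmul S Ag (mat_inv S Ag);
       L = (\<lambda>i j. if i \<in> B \<and> j \<in> S then Lc i j else idm i j);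
       Li = mat_inv M L
     in (mmul M Li Ag, mmul M (mmul M Li Sg) (adj Li)))"

text \<open>elim_seq M A Sigma t ord k = (A_{g_{k+1}}, Sigma_{g_{k+1}}), i.e. the matrices just before
  eliminating node ord ! k.  Boundary sets are those of the clusters w.r.t. the original A.\<close>
fun elim_seq :: "'a set \<Rightarrow> 'a cmat \<Rightarrow> 'a cmat \<Rightarrow> 'a ctree \<Rightarrow> bool list list \<Rightarrow> nat \<Rightarrow> 'a cmat \<times> 'a cmat" where
  "elim_seq M A Sig t ord 0 = (A, Sig)"
| "elim_seq M A Sig t ord (Suc k) =
     elim_step M (bnd M A (clus t (ord ! k))) (priv M A t (ord ! k)) (elim_seq M A Sig t ord k)"

end

theory Submission
  imports Defs
begin

text \<open>The transformation \<open>L\<^sub>g\<close> is the identity outside the rows \<open>B\<^sub>g\<close>, and so is any inverse of it;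
  hence \<open>\<Sigma>\<^sub>g\<^sub>+ = L\<^sub>g\<^sup>-\<^sup>1 \<Sigma>\<^sub>g L\<^sub>g\<^sup>-\<^sup>\<dagger>\<close> agrees with \<open>\<Sigma>\<^sub>g\<close> on all entries whose row and column avoid \<open>B\<^sub>g\<close>.
  A node eliminated before a leaf \<open>i\<close> is neither an ancestor of \<open>i\<close> (ancestors come later in a
  consistent ordering) nor a descendant (a leaf has none), so its cluster, and in particular its
  boundary set, is disjoint from \<open>C\<^sub>i\<close>. Thus no step before \<open>i\<close> touches \<open>\<Sigma>(C\<^sub>i,C\<^sub>i)\<close>.\<close>

lemma sum_idm_mult_left: "finite M \<Longrightarrow> i \<in> M \<Longrightarrow> (\<Sum>k\<in>M. idm i k * f k) = f i"
  by (simp add: idm_def if_distrib[of "\<lambda>c. c * _"] cong: if_cong)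

lemma sum_mult_idm_right: "finite M \<Longrightarrow> j \<in> M \<Longrightarrow> (\<Sum>k\<in>M. f k * idm k j) = f j"
  by (simp add: idm_def if_distrib[of "\<lambda>c. _ * c"] cong: if_cong)

lemma is_inv_on_restrict:
  assumes "is_inv_on S X Y"
  shows "is_inv_on S X (\<lambda>i j. if i \<in> S \<and> j \<in> S then Y i j else 0)"
  using assms unfolding is_inv_on_def mmul_def by (auto cong: sum.cong)

lemma is_inv_on_mat_inv:
  assumes "is_inv_on S X Y"
  shows "is_inv_on S X (mat_inv S X)"
proof -
  let ?Y = "\<lambda>i j. if i \<in> S \<and> j \<in> S then Y i j else 0"
  have "is_inv_on S X ?Y \<and> (\<forall>i j. i \<notin> S \<or> j \<notin> S \<longrightarrow> ?Y i j = 0)"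
    using is_inv_on_restrict[OF assms] by auto
  then show ?thesis unfolding mat_inv_def by (rule someI2[where Q = "is_inv_on S X"]) blast
qed

lemma is_inv_on_idm_add_idm_diff:
  assumes fin: "finite M" and sq0: "\<forall>i\<in>M. \<forall>j\<in>M. mmul M N N i j = 0"
  shows "is_inv_on M (\<lambda>i j. idm i j + N i j) (\<lambda>i j. idm i j - N i j)"
  unfolding is_inv_on_def
proof (intro ballI conjI)
  fix i j assume ij: "i \<in> M" "j \<in> M"
  have "mmul M (\<lambda>i j. idm i j + N i j) (\<lambda>i j. idm i j - N i j) i j
      = (\<Sum>k\<in>M. idm i k * (idm k j - N k j)) + (\<Sum>k\<in>M. N i k * idm k j) - mmul M N N i j"
    by (simp add: mmul_def algebra_simps sum.distrib sum_subtractf)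
  also have "\<dots> = idm i j"
    using fin ij sq0 by (simp add: sum_idm_mult_left sum_mult_idm_right)
  finally show "mmul M (\<lambda>i j. idm i j + N i j) (\<lambda>i j. idm i j - N i j) i j = idm i j" .
  have "mmul M (\<lambda>i j. idm i j - N i j) (\<lambda>i j. idm i j + N i j) i j
      = (\<Sum>k\<in>M. idm i k * (idm k j + N k j)) - (\<Sum>k\<in>M. N i k * idm k j) - mmul M N N i j"
    by (simp add: mmul_def algebra_simps sum.distrib sum_subtractf)
  also have "\<dots> = idm i j"
    using fin ij sq0 by (simp add: sum_idm_mult_left sum_mult_idm_right)
  finally show "mmul M (\<lambda>i j. idm i j - N i j) (\<lambda>i j. idm i j + N i j) i j = idm i j" .
qed

lemma right_inverse_row_idm:
  assumes fin: "finite M" and inv: "is_inv_on M L Li"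
    and z: "z \<in> M" and row: "\<forall>k\<in>M. L z k = idm z k" and j: "j \<in> M"
  shows "Li z j = idm z j"
proof -
  have "Li z j = (\<Sum>k\<in>M. L z k * Li k j)"
    using fin z row by (simp add: sum_idm_mult_left)
  also have "\<dots> = idm z j" using inv z j by (simp add: is_inv_on_def mmul_def)
  finally show ?thesis .
qed

lemma congruence_entry_eq:
  assumes fin: "finite M" and x: "x \<in> M" and y: "y \<in> M"
    and rowx: "\<forall>j\<in>M. P x j = idm x j" and rowy: "\<forall>j\<in>M. P y j = idm y j"
  shows "mmul M (mmul M P X) (adj P) x y = X x y"
proof -
  have "mmul M (mmul M P X) (adj P) x y = (\<Sum>l\<in>M. (\<Sum>k\<in>M. idm x k * X k l) * idm l y)"
    using rowx rowy unfolding mmul_def adj_def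
    by (intro sum.cong refl) (simp add: idm_def)
  also have "\<dots> = X x y" using fin x y by (simp add: sum_idm_mult_left sum_mult_idm_right)
  finally show ?thesis .
qed

lemma elim_step_snd_eq:
  assumes BS: "B \<inter> S = {}" and fin: "finite M"
    and x: "x \<in> M" "x \<notin> B" and y: "y \<in> M" "y \<notin> B"
  shows "snd (elim_step M B S st) x y = snd st x y"
proof -
  define N where "N = (\<lambda>i j. if i \<in> B \<and> j \<in> S then mmul S (fst st) (mat_inv S (fst st)) i j else 0)"
  define L where "L = (\<lambda>i j. idm i j + N i j)"
  have L_eq: "L = (\<lambda>i j. if i \<in> B \<and> j \<in> S then mmul S (fst st) (mat_inv S (fst st)) i j else idm i j)"
    using BS by (auto simp: L_def N_def idm_def fun_eq_iff)
  have "\<forall>i\<in>M. \<forall>j\<in>M. mmul M N N i j = 0"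
    using BS by (auto simp: mmul_def N_def intro!: sum.neutral)
  then have "is_inv_on M L (mat_inv M L)"
    unfolding L_def using is_inv_on_idm_add_idm_diff[OF fin] is_inv_on_mat_inv by blast
  moreover have "\<forall>k\<in>M. L z k = idm z k" if "z \<notin> B" for z
    using that by (simp add: L_def N_def)
  ultimately have "\<forall>j\<in>M. mat_inv M L z j = idm z j" if "z \<in> M" "z \<notin> B" for z
    using that right_inverse_row_idm[OF fin] by blast
  with x y fin show ?thesis
    unfolding elim_step_def Let_def L_eq[symmetric] snd_conv by (simp add: congruence_entry_eq)
qed

lemma augc_wf_ctree:
  "wf_ctree X \<Longrightarrow> wf_ctree t \<Longrightarrow> cluster X \<inter> cluster t = {} \<Longrightarrow>
   wf_ctree (augc X t p) \<and> cluster (augc X t p) \<subseteq> cluster X \<union> cluster t"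
  by (induction X t p rule: augc.induct) auto

lemma aug_tree_wf_ctree:
  "wf_ctree T \<Longrightarrow> wf_ctree (aug_tree T p) \<and> cluster (aug_tree T p) \<subseteq> cluster T"
  by (induction T p rule: aug_tree.induct) (use augc_wf_ctree in \<open>fastforce+\<close>)

lemma cluster_subtree_subset: "subtree t p = Some a \<Longrightarrow> cluster a \<subseteq> cluster t"
  by (induction t p rule: subtree.induct) auto

lemma subtree_append:
  "subtree t (p @ x) = (case subtree t p of None \<Rightarrow> None | Some s \<Rightarrow> subtree s x)"
  by (induction t p rule: subtree.induct) auto

lemma subtree_Nd_Cons: "subtree (Nd l r) (c # p) = subtree (if c then r else l) p"
  by (cases c) simp_all

lemma cluster_subtree_disjoint:
  "wf_ctree t \<Longrightarrow> subtree t p = Some a \<Longrightarrow> subtree t q = Some b \<Longrightarrow>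
   \<nexists>x. q = p @ x \<Longrightarrow> \<nexists>x. p = q @ x \<Longrightarrow> cluster a \<inter> cluster b = {}"
proof (induction t p arbitrary: q rule: subtree.induct)
  case (2 l r p)
  then show ?case
    using cluster_subtree_subset by (cases q) (auto simp: subtree_Nd_Cons split: if_splits, blast+)
next
  case (3 l r p)
  then show ?case
    using cluster_subtree_subset by (cases q) (auto simp: subtree_Nd_Cons split: if_splits, blast+)
qed auto

lemma consistent_ordering_leaf_disjoint:
  assumes wf: "wf_ctree t" and cons: "consistent_ordering t ord"
    and jk: "j < k" and k: "k < length ord"
    and leaf: "subtree t (ord ! k) = Some (Lf C)"
  shows "clus t (ord ! j) \<inter> C = {}"
proof -
  have j: "j < length ord" using jk k by simp
  then have "ord ! j \<in> nodes t" using cons by (auto simp: consistent_ordering_def)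
  then obtain a where a: "subtree t (ord ! j) = Some a" by (auto simp: nodes_def)
  have neq: "ord ! j \<noteq> ord ! k"
    using cons j k jk by (simp add: consistent_ordering_def nth_eq_iff_index_eq)
  have not_ancestor: "\<nexists>x. ord ! k = ord ! j @ x"
  proof
    assume "\<exists>x. ord ! k = ord ! j @ x"
    with neq have "proper_desc (ord ! k) (ord ! j)" by (auto simp: proper_desc_def)
    with cons j k have "k < j" by (simp add: consistent_ordering_def)
    with jk show False by simp
  qed
  have not_descendant: "\<nexists>x. ord ! j = ord ! k @ x"
  proof
    assume "\<exists>x. ord ! j = ord ! k @ x"
    with neq obtain c x where "ord ! j = ord ! k @ c # x" by (metis append_Nil2 neq_Nil_conv)
    with a leaf show False by (simp add: subtree_append)
  qed
  from cluster_subtree_disjoint[OF wf a leaf not_ancestor not_descendant] a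
  show ?thesis by (simp add: clus_def)
qed

lemma bnd_priv_disjoint: "bnd M A (clus t p) \<inter> priv M A t p = {}"
  unfolding priv_def clus_def inn_def by (cases "the (subtree t p)") auto

lemma elim_seq_snd_eq:
  assumes fin: "finite M" and CM: "C \<subseteq> M"
    and avoid: "\<forall>j<k. bnd M A (clus t (ord ! j)) \<inter> C = {}"
    and x: "x \<in> C" and y: "y \<in> C"
  shows "snd (elim_seq M A Sig t ord k) x y = Sig x y"
  using avoid
proof (induction k)
  case (Suc k)
  then have "snd (elim_seq M A Sig t ord (Suc k)) x y = snd (elim_seq M A Sig t ord k) x y"
    using x y CM by (auto simp only: elim_seq.simps intro!: elim_step_snd_eq bnd_priv_disjoint fin)
  with Suc show ?case by simp
qed simp

theorem corollary3:
  fixes M :: "'a set" and A Sig :: "'a cmat" and T :: "'a ctree"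
    and rp :: "bool list" and Cr :: "'a set" and ord :: "bool list list"
    and k :: nat and Ci :: "'a set"
  assumes finM: "finite M"
    and invA: "invertible_on M A"
    and symA: "\<forall>i\<in>M. \<forall>j\<in>M. A i j \<noteq> 0 \<longleftrightarrow> A j i \<noteq> 0"
    and sparse: "\<forall>i\<in>M. \<forall>j\<in>M. i \<noteq> j \<and> A i j = 0 \<longrightarrow> Sig i j = 0"
    and wfT: "wf_ctree T" and rootT: "cluster T = M"
    and leaf_r: "subtree T rp = Some (Lf Cr)" and rp_ne: "rp \<noteq> []"
    and cons: "consistent_ordering (aug_tree T rp) ord"
    and inv_steps: "\<forall>j < length ord.
        invertible_on (priv M A (aug_tree T rp) (ord ! j)) (fst (elim_seq M A Sig (aug_tree T rp) ord j))"
    and k: "k < length ord"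
    and leaf_i: "subtree (aug_tree T rp) (ord ! k) = Some (Lf Ci)"
  shows "\<forall>x\<in>Ci. \<forall>y\<in>Ci. snd (elim_seq M A Sig (aug_tree T rp) ord k) x y = Sig x y"
proof -
  have wf: "wf_ctree (aug_tree T rp)" and sub: "cluster (aug_tree T rp) \<subseteq> M"
    using aug_tree_wf_ctree[OF wfT] rootT by auto
  have "Ci \<subseteq> M" using cluster_subtree_subset[OF leaf_i] sub by simp
  moreover have "\<forall>j<k. bnd M A (clus (aug_tree T rp) (ord ! j)) \<inter> Ci = {}"
    using consistent_ordering_leaf_disjoint[OF wf cons _ k leaf_i] by (auto simp: bnd_def)
  ultimately show ?thesis using elim_seq_snd_eq[OF finM] by blast
qed

end
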